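(* Let $N\ge1$, $h,\varepsilon\in(0,1)$, and let $\Phi$ be the opinion operator defined in the context. Let $0\le L\le N$ and let $P=(p_1,\dots,p_N)$ with $p_k=-1$ for $k\le L$ and $p_k=1$ for $k>L$ (a basic fixed point). Let $V^0\in[-1,1]^N$ have nondecreasing components and satisfy $\rho(V^0,P)\le 1-\varepsilon$, where $\rho(V,V')=\max_{1\le k\le N}|v_k-v_k'|$. Then there exists $n_0$ such that $\Phi^n(V^0)=P$ for all $n\ge n_0$.
   Context: For $V=(v_1,\dots,v_N)\in[-1,1]^N$ and each $k$, let $J(v_k)=\{l\in\{1,\dots,N\}:|v_l-v_k|\le\varepsilon\}$ and $I(v_k)=|J(v_k)|$. Put $w_k(V)=v_k+\frac{h}{I(v_k)}\sum_{l\in J(v_k)}v_l$. Then $\Phi(V)=(v_1',\dots,v_N')$ where $v_k'=-1$ if $w_k<-1$, $v_k'=1$ if $w_k>1$, and $v_k'=w_k$ if $|w_k|\le1$. *)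

theory Defs
  imports "HOL-Analysis.Analysis"
begin

text \<open>Opinion vectors V = (v_1,...,v_N) are represented as functions nat => real;
  only the indices 1..N are meaningful.\<close>

definition Jset :: "nat \<Rightarrow> real \<Rightarrow> (nat \<Rightarrow> real) \<Rightarrow> nat \<Rightarrow> nat set" where
  "Jset N \<epsilon> V k = {l \<in> {1..N}. \<bar>V l - V k\<bar> \<le> \<epsilon>}"

definition Icard :: "nat \<Rightarrow> real \<Rightarrow> (nat \<Rightarrow> real) \<Rightarrow> nat \<Rightarrow> nat" where
  "Icard N \<epsilon> V k = card (Jset N \<epsilon> V k)"

definition wval :: "nat \<Rightarrow> real \<Rightarrow> real \<Rightarrow> (nat \<Rightarrow> real) \<Rightarrow> nat \<Rightarrow> real" where
  "wval N h \<epsilon> V k = V k + h / real (Icard N \<epsilon> V k) * (\<Sum>l\<in>Jset N \<epsilon> V k. V l)"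

definition Phi :: "nat \<Rightarrow> real \<Rightarrow> real \<Rightarrow> (nat \<Rightarrow> real) \<Rightarrow> (nat \<Rightarrow> real)" where
  "Phi N h \<epsilon> V = (\<lambda>k. if k \<in> {1..N} then
      (if wval N h \<epsilon> V k < -1 then -1
       else if wval N h \<epsilon> V k > 1 then 1
       else wval N h \<epsilon> V k)
    else 0)"

definition rho :: "nat \<Rightarrow> (nat \<Rightarrow> real) \<Rightarrow> (nat \<Rightarrow> real) \<Rightarrow> real" where
  "rho N V V' = Max ((\<lambda>k. \<bar>V k - V' k\<bar>) ` {1..N})"

end

theory Submission
  imports Defs
begin

text \<open>Read \<open>P\<close> as a vector of signs \<open>s\<close>. If every opinion has margin \<open>s k * v k \<ge> \<epsilon>\<close>,
  then opinions of opposite sign are more than \<open>2\<epsilon>\<close> apart, so every confidence set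
  \<open>J(v k)\<close> lies on one side and its mean has margin at least \<open>\<epsilon>\<close> as well. Hence one step of
  \<open>\<Phi>\<close> increases each margin by at least \<open>h\<epsilon>\<close> until it is cut off at 1, the margin \<open>\<ge> \<epsilon>\<close>
  is preserved, and after \<open>n \<ge> 1/(h\<epsilon>)\<close> steps every margin is 1, i.e. \<open>\<Phi>\<^sup>n V\<^sup>0 = P\<close>.\<close>

definition has_margin :: "nat \<Rightarrow> (nat \<Rightarrow> real) \<Rightarrow> real \<Rightarrow> (nat \<Rightarrow> real) \<Rightarrow> bool" where
  "has_margin N s \<delta> V \<longleftrightarrow> (\<forall>k\<in>{1..N}. \<delta> \<le> s k * V k)"

lemma has_margin_mono:
  "has_margin N s \<delta> V \<Longrightarrow> \<delta>' \<le> \<delta> \<Longrightarrow> has_margin N s \<delta>' V"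
  unfolding has_margin_def by force

lemma Phi_eq_clip:
  "k \<in> {1..N} \<Longrightarrow> Phi N h \<epsilon> V k = max (-1) (min 1 (wval N h \<epsilon> V k))"
  unfolding Phi_def by auto

lemma abs_Phi_le_1: "\<bar>Phi N h \<epsilon> V k\<bar> \<le> 1"
  unfolding Phi_def by auto

lemma Jset_same_sign:
  assumes signs: "\<And>k. k \<in> {1..N} \<Longrightarrow> s k \<in> {-1, 1}"
    and margin: "has_margin N s \<epsilon> V" and "0 < \<epsilon>"
    and k: "k \<in> {1..N}" and l: "l \<in> Jset N \<epsilon> V k"
  shows "s l = s k"
proof (rule ccontr)
  assume "s l \<noteq> s k"
  have l_range: "l \<in> {1..N}" and close: "\<bar>V l - V k\<bar> \<le> \<epsilon>"
    using l unfolding Jset_def by auto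
  then have "s l = - s k" "s k \<in> {-1, 1}"
    using signs[OF k] signs[OF l_range] \<open>s l \<noteq> s k\<close> by auto
  moreover have "\<epsilon> \<le> s k * V k" "\<epsilon> \<le> s l * V l"
    using margin k l_range unfolding has_margin_def by auto
  ultimately have "2 * \<epsilon> \<le> \<bar>V l - V k\<bar>"
    by auto
  with close \<open>0 < \<epsilon>\<close> show False
    by linarith
qed

lemma wval_margin_gain:
  assumes signs: "\<And>k. k \<in> {1..N} \<Longrightarrow> s k \<in> {-1, 1}"
    and margin: "has_margin N s \<epsilon> V" and "0 < \<epsilon>" "0 \<le> h"
    and k: "k \<in> {1..N}"
  shows "s k * V k + h * \<epsilon> \<le> s k * wval N h \<epsilon> V k"
proof -
  let ?J = "Jset N \<epsilon> V k"
  have "finite ?J" "k \<in> ?J"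
    using k \<open>0 < \<epsilon>\<close> unfolding Jset_def by auto
  then have card_pos: "0 < real (card ?J)"
    using card_gt_0_iff by fastforce
  have "\<epsilon> \<le> s k * V l" if "l \<in> ?J" for l
    using margin Jset_same_sign[OF signs margin \<open>0 < \<epsilon>\<close> k that] that
    unfolding has_margin_def Jset_def by fastforce
  then have "real (card ?J) * \<epsilon> \<le> s k * (\<Sum>l\<in>?J. V l)"
    using sum_mono[of ?J "\<lambda>_. \<epsilon>" "\<lambda>l. s k * V l"] by (simp add: sum_distrib_left)
  then have "h / real (card ?J) * (real (card ?J) * \<epsilon>) \<le> h / real (card ?J) * (s k * (\<Sum>l\<in>?J. V l))"
    using card_pos \<open>0 \<le> h\<close> by (intro mult_left_mono) auto
  then have "h * \<epsilon> \<le> h / real (card ?J) * (s k * (\<Sum>l\<in>?J. V l))"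
    using card_pos by simp
  then show ?thesis
    unfolding wval_def Icard_def by (simp add: algebra_simps)
qed

lemma Phi_margin_gain:
  assumes signs: "\<And>k. k \<in> {1..N} \<Longrightarrow> s k \<in> {-1, 1}"
    and margin: "has_margin N s \<epsilon> V" and "0 < \<epsilon>" "0 \<le> h"
    and k: "k \<in> {1..N}"
  shows "min 1 (s k * V k + h * \<epsilon>) \<le> s k * Phi N h \<epsilon> V k"
proof -
  have "s k \<in> {-1, 1}" "0 < s k * V k"
    using signs k margin \<open>0 < \<epsilon>\<close> unfolding has_margin_def by fastforce+
  with wval_margin_gain[OF signs margin \<open>0 < \<epsilon>\<close> \<open>0 \<le> h\<close> k] show ?thesis
    unfolding Phi_eq_clip[OF k] by auto
qed

lemma has_margin_Phi_iter:
  assumes signs: "\<And>k. k \<in> {1..N} \<Longrightarrow> s k \<in> {-1, 1}"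
    and margin: "has_margin N s \<epsilon> V" and "0 < \<epsilon>" "\<epsilon> \<le> 1" "0 \<le> h"
  shows "has_margin N s (min 1 (\<epsilon> + real n * h * \<epsilon>)) ((Phi N h \<epsilon> ^^ n) V)"
proof (induction n)
  case 0
  show ?case using margin \<open>\<epsilon> \<le> 1\<close> by (simp add: min_absorb2)
next
  case (Suc n)
  let ?W = "(Phi N h \<epsilon> ^^ n) V"
  have "\<epsilon> \<le> min 1 (\<epsilon> + real n * h * \<epsilon>)"
    using \<open>0 < \<epsilon>\<close> \<open>\<epsilon> \<le> 1\<close> \<open>0 \<le> h\<close> by simp
  then have margin_W: "has_margin N s \<epsilon> ?W"
    using Suc.IH has_margin_mono by blast
  have "min 1 (\<epsilon> + real (Suc n) * h * \<epsilon>) \<le> s k * Phi N h \<epsilon> ?W k" if k: "k \<in> {1..N}" for k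
  proof -
    have "min 1 (\<epsilon> + real n * h * \<epsilon>) \<le> s k * ?W k"
      using Suc.IH k unfolding has_margin_def by blast
    moreover have "0 \<le> h * \<epsilon>"
      using \<open>0 < \<epsilon>\<close> \<open>0 \<le> h\<close> by simp
    ultimately have "min 1 ((\<epsilon> + real n * h * \<epsilon>) + h * \<epsilon>) \<le> min 1 (s k * ?W k + h * \<epsilon>)"
      by (auto simp: min_def split: if_splits)
    then have "min 1 (\<epsilon> + real (Suc n) * h * \<epsilon>) \<le> min 1 (s k * ?W k + h * \<epsilon>)"
      by (simp add: algebra_simps)
    also have "\<dots> \<le> s k * Phi N h \<epsilon> ?W k"
      using Phi_margin_gain[OF signs margin_W \<open>0 < \<epsilon>\<close> \<open>0 \<le> h\<close> k] .
    finally show ?thesis .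
  qed
  then show ?case
    unfolding has_margin_def by simp
qed

lemma has_margin_of_rho:
  assumes signs: "\<And>k. k \<in> {1..N} \<Longrightarrow> s k \<in> {-1, 1}"
    and "rho N V s \<le> 1 - \<epsilon>"
  shows "has_margin N s \<epsilon> V"
  unfolding has_margin_def
proof
  fix k assume k: "k \<in> {1..N}"
  have "\<bar>V k - s k\<bar> \<le> rho N V s"
    unfolding rho_def using k by (intro Max_ge) auto
  with signs[OF k] \<open>rho N V s \<le> 1 - \<epsilon>\<close> show "\<epsilon> \<le> s k * V k"
    by auto
qed

lemma Phi_iter_eventually_eq_signs:
  assumes signs: "\<And>k. k \<in> {1..N} \<Longrightarrow> s k \<in> {-1, 1}"
    and margin: "has_margin N s \<epsilon> V" and "0 < \<epsilon>" "\<epsilon> \<le> 1" "0 < h"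
  shows "\<exists>n0. \<forall>n\<ge>n0. \<forall>k\<in>{1..N}. (Phi N h \<epsilon> ^^ n) V k = s k"
proof -
  have "0 < h * \<epsilon>"
    using \<open>0 < h\<close> \<open>0 < \<epsilon>\<close> by simp
  then obtain n0 :: nat where n0: "1 < real n0 * (h * \<epsilon>)"
    using reals_Archimedean3 by blast
  have "(Phi N h \<epsilon> ^^ n) V k = s k" if "n0 \<le> n" and k: "k \<in> {1..N}" for n k
  proof -
    have "real n0 * (h * \<epsilon>) \<le> real n * (h * \<epsilon>)"
      using \<open>n0 \<le> n\<close> \<open>0 < h * \<epsilon>\<close> by (intro mult_right_mono) auto
    with n0 have big: "1 \<le> real n * h * \<epsilon>"
      by (simp add: mult.assoc)
    then obtain m where "n = Suc m"
      by (cases n) auto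
    have "has_margin N s (min 1 (\<epsilon> + real n * h * \<epsilon>)) ((Phi N h \<epsilon> ^^ n) V)"
      using has_margin_Phi_iter[OF signs margin] \<open>0 < \<epsilon>\<close> \<open>\<epsilon> \<le> 1\<close> \<open>0 < h\<close> by simp
    moreover have "min 1 (\<epsilon> + real n * h * \<epsilon>) = 1"
      using big \<open>0 < \<epsilon>\<close> by simp
    ultimately have "1 \<le> s k * (Phi N h \<epsilon> ^^ n) V k"
      using k unfolding has_margin_def by simp
    moreover have "\<bar>(Phi N h \<epsilon> ^^ n) V k\<bar> \<le> 1"
      using abs_Phi_le_1 \<open>n = Suc m\<close> by simp
    ultimately show ?thesis
      using signs[OF k] by auto
  qed
  then show ?thesis by blast
qed

theorem theorem1:
  fixes N L :: nat and h \<epsilon> :: real and V0 P :: "nat \<Rightarrow> real"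
  assumes "N \<ge> 1"
    and "0 < h" "h < 1" "0 < \<epsilon>" "\<epsilon> < 1"
    and "L \<le> N"
    and "\<And>k. k \<in> {1..N} \<Longrightarrow> P k = (if k \<le> L then -1 else 1)"
    and "\<And>k. k \<in> {1..N} \<Longrightarrow> V0 k \<in> {-1..1}"
    and "\<And>k l. k \<in> {1..N} \<Longrightarrow> l \<in> {1..N} \<Longrightarrow> k \<le> l \<Longrightarrow> V0 k \<le> V0 l"
    and "rho N V0 P \<le> 1 - \<epsilon>"
  shows "\<exists>n0. \<forall>n\<ge>n0. \<forall>k\<in>{1..N}. ((Phi N h \<epsilon>) ^^ n) V0 k = P k"
proof -
  have signs: "\<And>k. k \<in> {1..N} \<Longrightarrow> P k \<in> {-1, 1}"
    using assms(7) by simp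
  have "has_margin N P \<epsilon> V0"
    using has_margin_of_rho[OF signs assms(10)] .
  with signs show ?thesis
    using Phi_iter_eventually_eq_signs assms(2,4,5) by simp
qed

end
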